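(* Let $L$ be a hyperbolic lattice of rank $m+1$ with a fixed positive cone $\mathcal{P}_L$, and let $f$ be a non-zero vector in the closure $\overline{\mathcal{P}}_L$ with $f^2=0$. Let $\alpha>0$ and let $\mathrm{HS}_\alpha$ be the horosphere $\{x\in\mathcal{P}_L : \langle x,f\rangle^2/x^2=\alpha\}/\mathbb{R}_{>0}$ with base $b=\mathbb{R}_{>0}f$. Put $$c(f,\mathrm{HS}_\alpha):=\sup\Big\{-\frac{\langle v,f\rangle^2}{v^2} \;:\; v\in\mathcal{N}_L,\ \text{there exists } x\in\mathcal{P}_L \text{ with } \langle x,v\rangle=0 \text{ and } \frac{\langle x,f\rangle^2}{x^2}=\alpha\Big\}.$$ Then $c(f,\mathrm{HS}_\alpha)\le\alpha$.
   Context: A hyperbolic lattice is a free $\mathbb{Z}$-module $L$ of finite rank $n>1$ with a non-degenerate symmetric bilinear form $\langle\ ,\ \rangle$ with values in $\mathbb{Z}$ of signature $(1,n-1)$; the form is extended to $L\otimes\mathbb{R}$ and $x^2:=\langle x,x\rangle$. A positive cone $\mathcal{P}_L$ is one of the two connected components of $\{x\in L\otimes\mathbb{R}: x^2>0\}$, and $\overline{\mathcal{P}}_L$ is its closure. $\mathcal{N}_L:=\{v\in L\otimes\mathbb{R}: v^2<0\}$. The hyperbolic space is $\mathcal{H}_L=\mathcal{P}_L/\mathbb{R}_{>0}$, and the horospheres with base the boundary point $b=\mathbb{R}_{>0}f$ are the level sets of the function $x\mapsto\langle x,f\rangle^2/x^2$ on $\mathcal{H}_L$. *)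

theory Defs
  imports "HOL-Analysis.Analysis"
begin

text \<open>A hyperbolic lattice L of rank n = CARD('n) is modelled as the standard lattice
  of integer vectors in real^'n, equipped with an integral symmetric Gram matrix G;
  L \<otimes> R is real^'n and the form is extended bilinearly.\<close>

definition bform :: "real^'n^'n \<Rightarrow> real^'n \<Rightarrow> real^'n \<Rightarrow> real" where
  "bform G x y = x \<bullet> (G *v y)"

definition hyperbolic_gram :: "real^'n^'n \<Rightarrow> bool" where
  "hyperbolic_gram G \<longleftrightarrow>

     (\<forall>i j. G$i$j \<in> \<int>) \<and>
     transpose G = G \<and>
     (\<exists>(P::real^'n^'n) i0. invertible P \<and>
        transpose P ** G ** P =
          (\<chi> i j. if i = j then (if i = i0 then 1 else -1) else 0))"

definition positive_cone :: "real^'n^'n \<Rightarrow> (real^'n) set \<Rightarrow> bool" where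
  "positive_cone G C \<longleftrightarrow>
     (\<exists>x0. bform G x0 x0 > 0 \<and>
        C = connected_component_set {x. bform G x x > 0} x0)"

end

theory Submission
  imports Defs
begin

text \<open>Let \<open>x \<in> \<P>\<^sub>L\<close> with \<open>\<langle>x,v\<rangle> = 0\<close> and \<open>\<langle>x,f\<rangle>\<^sup>2/x\<^sup>2 = \<alpha>\<close>.
  Since the form has signature \<open>(1, n-1)\<close> and \<open>x\<^sup>2 > 0\<close>, it is negative semidefinite on
  \<open>x\<^sup>\<bottom>\<close>, so the Cauchy--Schwarz inequality holds there with reversed signs.
  Projecting the isotropic vector \<open>f\<close> to \<open>w = f - (\<langle>x,f\<rangle>/x\<^sup>2) x \<in> x\<^sup>\<bottom>\<close> gives
  \<open>w\<^sup>2 = -\<alpha>\<close> and \<open>\<langle>v,w\<rangle> = \<langle>v,f\<rangle>\<close>, hence \<open>\<langle>v,f\<rangle>\<^sup>2 \<le> v\<^sup>2 w\<^sup>2 = -\<alpha> v\<^sup>2\<close>.\<close>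

lemma bform_add_left: "bform G (x + y) z = bform G x z + bform G y z"
  by (simp add: bform_def inner_add_left)

lemma bform_add_right: "bform G z (x + y) = bform G z x + bform G z y"
  by (simp add: bform_def inner_add_right algebra_simps)

lemma bform_diff_left: "bform G (x - y) z = bform G x z - bform G y z"
  by (simp add: bform_def inner_diff_left)

lemma bform_diff_right: "bform G z (x - y) = bform G z x - bform G z y"
  by (simp add: bform_def inner_diff_right algebra_simps)

lemma bform_scaleR_left: "bform G (c *\<^sub>R x) z = c * bform G x z"
  by (simp add: bform_def)

lemma bform_scaleR_right: "bform G z (c *\<^sub>R x) = c * bform G z x"
  by (simp add: bform_def algebra_simps)

lemmas bform_bilinear =
  bform_add_left bform_add_right bform_diff_left bform_diff_right
  bform_scaleR_left bform_scaleR_right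

lemma bform_commute: "transpose G = G \<Longrightarrow> bform G x y = bform G y x"
  unfolding bform_def
  by (metis dot_lmul_matrix inner_commute transpose_matrix_vector)

lemma bform_matrix_vector_mult:
  "bform G (P *v a) (P *v b) = a \<bullet> ((transpose P ** G ** P) *v b)"
  unfolding bform_def
  by (metis dot_lmul_matrix matrix_vector_mul_assoc vector_transpose_matrix)

definition lorentz_matrix :: "'n \<Rightarrow> real^'n^'n" where
  "lorentz_matrix i0 = (\<chi> i j. if i = j then (if i = i0 then 1 else -1) else 0)"

definition spatial_part :: "'n \<Rightarrow> real^'n \<Rightarrow> real^'n" where
  "spatial_part i0 a = (\<chi> i. if i = i0 then 0 else a$i)"

lemma lorentz_matrix_vector_mult:
  "lorentz_matrix i0 *v b = (\<chi> i. if i = i0 then b$i else - b$i)"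
proof -
  have "(lorentz_matrix i0 *v b)$i = (if i = i0 then b$i else - b$i)" for i
  proof -
    have "(lorentz_matrix i0 *v b)$i
          = (\<Sum>j\<in>UNIV. if i = j then (if i = i0 then b$i else - b$i) else 0)"
      unfolding lorentz_matrix_def matrix_vector_mult_def vec_lambda_beta by (intro sum.cong) auto
    then show ?thesis by simp
  qed
  then show ?thesis by (simp add: vec_eq_iff)
qed

lemma inner_lorentz_matrix:
  "a \<bullet> (lorentz_matrix i0 *v b) = a$i0 * b$i0 - spatial_part i0 a \<bullet> spatial_part i0 b"
proof -
  have "a \<bullet> (lorentz_matrix i0 *v b)
        = (\<Sum>i\<in>UNIV. (if i = i0 then a$i * b$i else 0) - (if i = i0 then 0 else a$i * b$i))"
    unfolding lorentz_matrix_vector_mult inner_vec_def by (intro sum.cong) auto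
  also have "\<dots> = a$i0 * b$i0 - (\<Sum>i\<in>UNIV. if i = i0 then 0 else a$i * b$i)"
    by (simp add: sum_subtractf)
  also have "(\<Sum>i\<in>UNIV. if i = i0 then 0 else a$i * b$i) = spatial_part i0 a \<bullet> spatial_part i0 b"
    unfolding inner_vec_def spatial_part_def by (intro sum.cong) auto
  finally show ?thesis .
qed

lemma minkowski_orthogonal_timelike_nonpos:
  fixes a b :: "'a::real_inner" and a0 b0 :: real
  assumes timelike: "a0 * a0 - a \<bullet> a > 0" and orth: "a0 * b0 - a \<bullet> b = 0"
  shows "b0 * b0 - b \<bullet> b \<le> 0"
proof -
  have a0: "a0\<^sup>2 > (norm a)\<^sup>2"
    using timelike power2_norm_eq_inner[of a] by (simp add: power2_eq_square)
  have "(a0 * b0)\<^sup>2 = \<bar>a \<bullet> b\<bar>\<^sup>2" using orth by simp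
  also have "\<dots> \<le> (norm a * norm b)\<^sup>2"
    by (intro power_mono Cauchy_Schwarz_ineq2) auto
  also have "\<dots> \<le> a0\<^sup>2 * (norm b)\<^sup>2"
    using a0 by (simp add: power_mult_distrib mult_right_mono)
  finally have "a0\<^sup>2 * b0\<^sup>2 \<le> a0\<^sup>2 * (norm b)\<^sup>2" by (simp add: power_mult_distrib)
  moreover have "a0\<^sup>2 > 0" using a0 zero_le_power2[of "norm a"] by linarith
  ultimately have "b0\<^sup>2 \<le> (norm b)\<^sup>2" by simp
  then show ?thesis using power2_norm_eq_inner[of b] by (simp add: power2_eq_square)
qed

lemma hyperbolic_orthogonal_nonpos:
  fixes G :: "real^'n^'n"
  assumes "hyperbolic_gram G" and "bform G x x > 0" and "bform G x y = 0"
  shows "bform G y y \<le> 0"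
proof -
  from assms(1) obtain P :: "real^'n^'n" and i0 :: 'n
    where "invertible P" and diag: "transpose P ** G ** P = lorentz_matrix i0"
    unfolding hyperbolic_gram_def lorentz_matrix_def by blast
  then obtain Q where PQ: "P ** Q = mat 1" using invertible_right_inverse by blast
  have P_Q: "z = P *v (Q *v z)" for z :: "real^'n"
    by (simp add: matrix_vector_mul_assoc PQ)
  have form: "bform G z z' = (Q *v z)$i0 * (Q *v z')$i0
                - spatial_part i0 (Q *v z) \<bullet> spatial_part i0 (Q *v z')" for z z'
    by (subst (1 2) P_Q) (simp add: bform_matrix_vector_mult diag inner_lorentz_matrix)
  show ?thesis
    using assms(2,3) unfolding form by (rule minkowski_orthogonal_timelike_nonpos)
qed

text \<open>Cauchy--Schwarz for the negative semidefinite restriction of the form to \<open>x\<^sup>\<bottom>\<close>,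
  obtained from \<open>(w + t v)\<^sup>2 \<le> 0\<close> at the minimising \<open>t = -\<langle>v,w\<rangle>/v\<^sup>2\<close>.\<close>

lemma hyperbolic_orthogonal_Cauchy_Schwarz:
  assumes G: "hyperbolic_gram G" and xx: "bform G x x > 0"
    and xv: "bform G x v = 0" and xw: "bform G x w = 0" and vv: "bform G v v < 0"
  shows "(bform G v w)\<^sup>2 \<le> bform G v v * bform G w w"
proof -
  have sym: "transpose G = G" using G unfolding hyperbolic_gram_def by blast
  define t where "t = - bform G v w / bform G v v"
  have "bform G x (w + t *\<^sub>R v) = 0" using xv xw by (simp add: bform_bilinear)
  then have "bform G (w + t *\<^sub>R v) (w + t *\<^sub>R v) \<le> 0"
    by (rule hyperbolic_orthogonal_nonpos[OF G xx])
  moreover have "bform G (w + t *\<^sub>R v) (w + t *\<^sub>R v)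
                 = bform G w w - (bform G v w)\<^sup>2 / bform G v v"
    using bform_commute[OF sym, of v w] vv
    by (simp add: bform_bilinear t_def field_simps power2_eq_square)
  ultimately have "bform G w w \<le> (bform G v w)\<^sup>2 / bform G v v" by simp
  then show ?thesis using vv by (simp add: field_simps mult.commute)
qed

lemma hyperbolic_horosphere_bound:
  assumes G: "hyperbolic_gram G" and xx: "bform G x x > 0"
    and xv: "bform G x v = 0" and vv: "bform G v v < 0" and ff: "bform G f f = 0"
  shows "- (bform G v f)\<^sup>2 / bform G v v \<le> (bform G x f)\<^sup>2 / bform G x x"
proof -
  have sym: "transpose G = G" using G unfolding hyperbolic_gram_def by blast
  define w where "w = f - (bform G x f / bform G x x) *\<^sub>R x"
  have xw: "bform G x w = 0" using xx by (simp add: w_def bform_bilinear)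
  have vw: "bform G v w = bform G v f"
    using xv bform_commute[OF sym, of v x] by (simp add: w_def bform_bilinear)
  have ww: "bform G w w = - (bform G x f)\<^sup>2 / bform G x x"
    using bform_commute[OF sym, of f x] xx ff
    by (simp add: w_def bform_bilinear field_simps power2_eq_square)
  have "(bform G v f)\<^sup>2 \<le> bform G v v * bform G w w"
    using hyperbolic_orthogonal_Cauchy_Schwarz[OF G xx xv xw vv] vw by simp
  then show ?thesis using vv xx by (simp add: ww field_simps)
qed

theorem lemma2p4:
  fixes G :: "real^'n^'n" and PL :: "(real^'n) set" and f :: "real^'n" and \<alpha> :: real
  assumes "CARD('n) > 1" and "hyperbolic_gram G"
    and "positive_cone G PL"
    and "f \<in> closure PL" and "f \<noteq> 0" and "bform G f f = 0"
    and "\<alpha> > 0"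
  shows "Sup (ereal ` {- (bform G v f)\<^sup>2 / bform G v v | v.
             bform G v v < 0 \<and>
             (\<exists>x\<in>PL. bform G x v = 0 \<and> (bform G x f)\<^sup>2 / bform G x x = \<alpha>)})
         \<le> ereal \<alpha>"
proof (rule Sup_least)
  fix y assume "y \<in> ereal ` {- (bform G v f)\<^sup>2 / bform G v v | v.
             bform G v v < 0 \<and>
             (\<exists>x\<in>PL. bform G x v = 0 \<and> (bform G x f)\<^sup>2 / bform G x x = \<alpha>)}"
  then obtain v x where y: "y = ereal (- (bform G v f)\<^sup>2 / bform G v v)"
    and vv: "bform G v v < 0" and "x \<in> PL" and xv: "bform G x v = 0"
    and \<alpha>: "(bform G x f)\<^sup>2 / bform G x x = \<alpha>" by blast
  have "bform G x x > 0"
    using assms(3) \<open>x \<in> PL\<close> connected_component_subset unfolding positive_cone_def by blast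
  from hyperbolic_horosphere_bound[OF assms(2) this xv vv assms(6)]
  show "y \<le> ereal \<alpha>" by (simp add: y \<alpha>)
qed

end
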